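(* There exist two model phylogenetic networks $N_3$ and $N_4$ on $S=\{1,\dots,13\}$, both of class I (no pair of distinct convergent nodes), such that $N_3\not\cong N_4$ but $\theta_{AB}(N_3)=\theta_{AB}(N_4)$.
   Context: A DAG $N=(V,E)$ is labeled in a finite set $S$ if its leaves (nodes of out-degree 0) are bijectively labeled by $S$; leaves are identified with their labels. Isomorphism ($\cong$) of labeled DAGs means isomorphism of directed graphs preserving leaf labels. A path $u\rightsquigarrow v$ is a sequence of nodes $u=v_0,\dots,v_k=v$ with $(v_{i-1},v_i)\in E$. A model phylogenetic network on $S$ is a rooted DAG labeled in $S$ whose nodes are classified as tree nodes or hybrid nodes, such that: the root and every internal tree node have out-degree 2; every hybrid node has out-degree 1 and in-degree 2 (allo-polyploid) or in-degree 1 (auto-polyploid), and every node of in-degree 2 is hybrid while all other nodes with in-degree $\neq 1$ are tree nodes; the child of a hybrid node is always a tree node; and strong time consistency holds: an arc is a tree arc if its head is a tree node and a network arc if its head is hybrid; if $x,y$ are nodes for which there exists a sequence $(v_0,\dots,v_k)$ with $v_0=x$, $v_k=y$ such that for every $i$ either $(v_i,v_{i+1})$ is an arc of $N$ or $(v_{i+1},v_i)$ is a network arc of $N$, and at least one pair $(v_i,v_{i+1})$ is a tree arc of $N$, then $x$ and $y$ do not have a hybrid child in common. For a node $u$: $C(u)$ is the set of leaves descending from $u$; $A(u)$ the set of leaves $s$ such that every path from the root to $s$ contains $u$; $B(u)=C(u)\setminus A(u)$. For an arc $e=(u,v)$, $\theta_{AB}(e)=(A(v),B(v),S\setminus C(v))$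 where each leaf $s\in A(v)\cup B(v)$ is weighted by the maximum number of hybrid nodes in a path from $v$ to $s$ (including $v$ and $s$); $\theta_{AB}(N)=\{\theta_{AB}(e)\mid e\in E\}$. Two nodes $u,v$ are convergent if for every leaf $s$ and every $k\ge 0$, there is a path $u\rightsquigarrow s$ containing exactly $k$ hybrid nodes if and only if there is a path $v\rightsquigarrow s$ containing exactly $k$ hybrid nodes. The network is of class I if it contains no pair of (distinct) convergent nodes. *)

theory Defs
  imports Main
begin

record 'v net =
  nodes :: "'v set"
  arcs  :: "('v \<times> 'v) set"
  hyb   :: "'v set"
  lbl   :: "'v \<Rightarrow> nat"

definition indeg :: "('v, 'b) net_scheme \<Rightarrow> 'v \<Rightarrow> nat" where
  "indeg N v = card {u \<in> nodes N. (u, v) \<in> arcs N}"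

definition outdeg :: "('v, 'b) net_scheme \<Rightarrow> 'v \<Rightarrow> nat" where
  "outdeg N v = card {w \<in> nodes N. (v, w) \<in> arcs N}"

definition leaves :: "('v, 'b) net_scheme \<Rightarrow> 'v set" where
  "leaves N = {v \<in> nodes N. outdeg N v = 0}"

definition labeled_dag :: "('v, 'b) net_scheme \<Rightarrow> nat set \<Rightarrow> bool" where
  "labeled_dag N S \<longleftrightarrow> finite (nodes N) \<and> arcs N \<subseteq> nodes N \<times> nodes N
     \<and> (\<forall>v. (v, v) \<notin> (arcs N)\<^sup>+) \<and> bij_betw (lbl N) (leaves N) S"

definition rooted :: "('v, 'b) net_scheme \<Rightarrow> bool" where
  "rooted N \<longleftrightarrow> (\<exists>!r. r \<in> nodes N \<and> indeg N r = 0)"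

definition root :: "('v, 'b) net_scheme \<Rightarrow> 'v" where
  "root N = (THE r. r \<in> nodes N \<and> indeg N r = 0)"

definition is_path :: "('v, 'b) net_scheme \<Rightarrow> 'v \<Rightarrow> 'v \<Rightarrow> 'v list \<Rightarrow> bool" where
  "is_path N u v p \<longleftrightarrow> p \<noteq> [] \<and> hd p = u \<and> last p = v \<and> set p \<subseteq> nodes N
     \<and> (\<forall>i. Suc i < length p \<longrightarrow> (p ! i, p ! Suc i) \<in> arcs N)"

definition hcount :: "('v, 'b) net_scheme \<Rightarrow> 'v list \<Rightarrow> nat" where
  "hcount N p = length (filter (\<lambda>x. x \<in> hyb N) p)"

definition tree_arcs :: "('v, 'b) net_scheme \<Rightarrow> ('v \<times> 'v) set" where
  "tree_arcs N = {(a, b) \<in> arcs N. b \<notin> hyb N}"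

definition network_arcs :: "('v, 'b) net_scheme \<Rightarrow> ('v \<times> 'v) set" where
  "network_arcs N = {(a, b) \<in> arcs N. b \<in> hyb N}"

definition tc_step :: "('v, 'b) net_scheme \<Rightarrow> ('v \<times> 'v) set" where
  "tc_step N = arcs N \<union> (network_arcs N)\<inverse>"

definition strong_time_consistent :: "('v, 'b) net_scheme \<Rightarrow> bool" where
  "strong_time_consistent N \<longleftrightarrow>
     (\<forall>x y. (x, y) \<in> (tc_step N)\<^sup>* O tree_arcs N O (tc_step N)\<^sup>* \<longrightarrow>
        \<not> (\<exists>h \<in> hyb N. (x, h) \<in> arcs N \<and> (y, h) \<in> arcs N))"

definition model_network :: "('v, 'b) net_scheme \<Rightarrow> nat set \<Rightarrow> bool" where
  "model_network N S \<longleftrightarrow>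
     labeled_dag N S \<and> rooted N \<and> hyb N \<subseteq> nodes N
     \<and> outdeg N (root N) = 2
     \<and> (\<forall>v \<in> nodes N - hyb N. v \<notin> leaves N \<longrightarrow> outdeg N v = 2)
     \<and> (\<forall>v \<in> hyb N. outdeg N v = 1 \<and> (indeg N v = 1 \<or> indeg N v = 2))
     \<and> (\<forall>v \<in> nodes N. indeg N v = 2 \<longrightarrow> v \<in> hyb N)
     \<and> (\<forall>v \<in> nodes N. indeg N v \<noteq> 1 \<and> indeg N v \<noteq> 2 \<longrightarrow> v \<notin> hyb N)
     \<and> (\<forall>h \<in> hyb N. \<forall>w. (h, w) \<in> arcs N \<longrightarrow> w \<notin> hyb N)
     \<and> strong_time_consistent N"

definition Cset :: "('v, 'b) net_scheme \<Rightarrow> 'v \<Rightarrow> 'v set" where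
  "Cset N u = {s \<in> leaves N. \<exists>p. is_path N u s p}"

definition Aset :: "('v, 'b) net_scheme \<Rightarrow> 'v \<Rightarrow> 'v set" where
  "Aset N u = {s \<in> leaves N. \<forall>p. is_path N (root N) s p \<longrightarrow> u \<in> set p}"

definition Bset :: "('v, 'b) net_scheme \<Rightarrow> 'v \<Rightarrow> 'v set" where
  "Bset N u = Cset N u - Aset N u"

definition hweight :: "('v, 'b) net_scheme \<Rightarrow> 'v \<Rightarrow> 'v \<Rightarrow> nat" where
  "hweight N v s = Max {hcount N p | p. is_path N v s p}"

definition theta_arc :: "('v, 'b) net_scheme \<Rightarrow> nat set \<Rightarrow> 'v \<times> 'v
     \<Rightarrow> (nat \<times> nat) set \<times> (nat \<times> nat) set \<times> nat set" where
  "theta_arc N S e = (let v = snd e in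
     ((\<lambda>s. (lbl N s, hweight N v s)) ` Aset N v,
      (\<lambda>s. (lbl N s, hweight N v s)) ` Bset N v,
      S - lbl N ` Cset N v))"

definition theta_AB :: "('v, 'b) net_scheme \<Rightarrow> nat set
     \<Rightarrow> ((nat \<times> nat) set \<times> (nat \<times> nat) set \<times> nat set) set" where
  "theta_AB N S = theta_arc N S ` arcs N"

definition convergent :: "('v, 'b) net_scheme \<Rightarrow> 'v \<Rightarrow> 'v \<Rightarrow> bool" where
  "convergent N u v \<longleftrightarrow> (\<forall>s \<in> leaves N. \<forall>k::nat.
     (\<exists>p. is_path N u s p \<and> hcount N p = k) \<longleftrightarrow> (\<exists>p. is_path N v s p \<and> hcount N p = k))"

definition class_I :: "('v, 'b) net_scheme \<Rightarrow> bool" where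
  "class_I N \<longleftrightarrow> (\<forall>u \<in> nodes N. \<forall>v \<in> nodes N. u \<noteq> v \<longrightarrow> \<not> convergent N u v)"

definition net_iso :: "('v, 'b) net_scheme \<Rightarrow> ('w, 'c) net_scheme \<Rightarrow> bool" where
  "net_iso N M \<longleftrightarrow> (\<exists>f. bij_betw f (nodes N) (nodes M)
     \<and> (\<forall>u \<in> nodes N. \<forall>v \<in> nodes N. (u, v) \<in> arcs N \<longleftrightarrow> (f u, f v) \<in> arcs M)
     \<and> (\<forall>s \<in> leaves N. lbl M (f s) = lbl N s))"

end

theory Submission
  imports Defs "HOL-Library.Product_Lexorder"
begin

text \<open>Below the root, both networks consist of a caterpillar carrying the leaves 4 to 13 and a small
  gadget of hybrid nodes carrying the leaves 1, 2, 3. The two gadgets have different sizes, so the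
  networks are not isomorphic, but their arcs produce the same set of weighted triples.

  Everything is decided by evaluation. If arcs increase in node number, paths are strictly
  increasing, so a bounded enumeration lists all of them. From the paths one reads off \<open>C\<close>, the weights and
  \<open>A\<close> (the leaves dominated by the head of the arc), and two nodes are convergent iff they have the
  same set of pairs (leaf, hybrid count of a path to it).\<close>

section \<open>General facts about networks\<close>

lemma is_path_iff_successively:
  "is_path N u v p \<longleftrightarrow> p \<noteq> [] \<and> hd p = u \<and> last p = v \<and> set p \<subseteq> nodes N
     \<and> successively (\<lambda>x y. (x, y) \<in> arcs N) p"
  by (simp add: is_path_def successively_conv_nth)

lemma net_iso_card_nodes: "net_iso N M \<Longrightarrow> card (nodes N) = card (nodes M)"
  unfolding net_iso_def by (auto intro: bij_betw_same_card)

lemma acyclic_if_increasing: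
  assumes "\<forall>(a, b) \<in> arcs N. a < (b :: 'v :: order)"
  shows "(v, v) \<notin> (arcs N)\<^sup>+"
proof -
  have "(x, y) \<in> (arcs N)\<^sup>+ \<Longrightarrow> x < y" for x y
    by (induction rule: trancl_induct) (use assms in \<open>auto intro: less_trans\<close>)
  then show ?thesis by blast
qed

text \<open>A time map that is constant across network arcs and strictly increases along tree arcs is
  non-decreasing along every step of the relation of the definition, so two parents of a common
  hybrid, having equal time, cannot be linked by a sequence containing a tree arc.\<close>

lemma strong_time_consistent_if_time_map:
  fixes \<tau> :: "'v \<Rightarrow> 'a :: linorder"
  assumes \<tau>: "\<forall>(a, b) \<in> arcs N. if b \<in> hyb N then \<tau> a = \<tau> b else \<tau> a < \<tau> b"
  shows "strong_time_consistent N"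
proof -
  have step_mono: "\<tau> x \<le> \<tau> y" if "(x, y) \<in> tc_step N" for x y
    using that \<tau> by (fastforce simp: tc_step_def network_arcs_def split: if_splits)
  have steps_mono: "\<tau> x \<le> \<tau> y" if "(x, y) \<in> (tc_step N)\<^sup>*" for x y
    using that by (induction rule: rtrancl_induct) (auto dest: step_mono)
  have tree_strict: "\<tau> x < \<tau> y" if "(x, y) \<in> tree_arcs N" for x y
    using that \<tau> by (fastforce simp: tree_arcs_def)
  have co_parents: "\<tau> x = \<tau> y" if "h \<in> hyb N" "(x, h) \<in> arcs N" "(y, h) \<in> arcs N" for x y h
  proof -
    have "\<tau> x = \<tau> h" "\<tau> y = \<tau> h" using that \<tau> by (auto split: prod.splits dest!: bspec)
    then show ?thesis by simp
  qed
  show ?thesis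
    unfolding strong_time_consistent_def
  proof (intro allI impI notI)
    fix x y assume "(x, y) \<in> (tc_step N)\<^sup>* O tree_arcs N O (tc_step N)\<^sup>*"
    then obtain a b where "\<tau> x \<le> \<tau> a" "\<tau> a < \<tau> b" "\<tau> b \<le> \<tau> y"
      by (blast dest: steps_mono tree_strict)
    moreover assume "\<exists>h \<in> hyb N. (x, h) \<in> arcs N \<and> (y, h) \<in> arcs N"
    then have "\<tau> x = \<tau> y" by (blast intro: co_parents)
    ultimately show False by simp
  qed
qed

definition leaf_hcounts :: "('v, 'b) net_scheme \<Rightarrow> 'v \<Rightarrow> ('v \<times> nat) set" where
  "leaf_hcounts N u = {(s, hcount N p) | s p. s \<in> leaves N \<and> is_path N u s p}"

lemma mem_leaf_hcounts:
  "(s, k) \<in> leaf_hcounts N u \<longleftrightarrow> s \<in> leaves N \<and> (\<exists>p. is_path N u s p \<and> hcount N p = k)"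
  by (auto simp: leaf_hcounts_def)

lemma convergent_iff_leaf_hcounts: "convergent N u v \<longleftrightarrow> leaf_hcounts N u = leaf_hcounts N v"
  unfolding convergent_def set_eq_iff split_paired_All mem_leaf_hcounts by blast

lemma class_I_iff_inj_on_leaf_hcounts: "class_I N \<longleftrightarrow> inj_on (leaf_hcounts N) (nodes N)"
  unfolding class_I_def inj_on_def convergent_iff_leaf_hcounts by blast

lemma Cset_eq_fst_leaf_hcounts: "Cset N u = fst ` leaf_hcounts N u"
  by (force simp: Cset_def leaf_hcounts_def)

lemma hweight_eq_Max_leaf_hcounts:
  "s \<in> leaves N \<Longrightarrow> hweight N v s = Max (snd ` {q \<in> leaf_hcounts N v. fst q = s})"
  unfolding hweight_def by (rule arg_cong[where f = Max]) (force simp: leaf_hcounts_def)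

section \<open>Path enumeration\<close>

definition succs :: "('v \<times> 'v) list \<Rightarrow> 'v \<Rightarrow> 'v list" where
  "succs es v = map snd (filter (\<lambda>e. fst e = v) es)"

definition preds :: "('v \<times> 'v) list \<Rightarrow> 'v \<Rightarrow> 'v list" where
  "preds es v = map fst (filter (\<lambda>e. snd e = v) es)"

lemma set_succs: "set (succs es v) = {w. (v, w) \<in> set es}"
  by (force simp: succs_def)

lemma set_preds: "set (preds es v) = {u. (u, v) \<in> set es}"
  by (force simp: preds_def)

fun walks :: "('v \<times> 'v) list \<Rightarrow> nat \<Rightarrow> 'v \<Rightarrow> 'v list list" where
  "walks es 0 u = [[u]]"
| "walks es (Suc n) u = [u] # map ((#) u) (concat (map (walks es n) (succs es u)))"

lemma set_walks:
  "p \<in> set (walks es n u) \<longleftrightarrow>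
     p \<noteq> [] \<and> hd p = u \<and> length p \<le> Suc n \<and> successively (\<lambda>x y. (x, y) \<in> set es) p"
proof (induction n arbitrary: u p)
  case 0
  then show ?case by (cases p) auto
next
  case (Suc n)
  show ?case
  proof (cases p)
    case (Cons x q)
    then show ?thesis
      using Suc.IH by (cases q) (auto simp: set_succs)
  qed auto
qed

lemma successively_set_subset:
  assumes "successively (\<lambda>x y. (x, y) \<in> R) p" "R \<subseteq> A \<times> A" "hd p \<in> A"
  shows "set p \<subseteq> A"
  using assms by (induction p rule: induct_list012) auto

lemma set_foldr_filter_Inter:
  "set (foldr (\<lambda>p. filter (\<lambda>x. x \<in> set p)) ps xs) = set xs \<inter> (\<Inter>p \<in> set ps. set p)"
  by (induction ps) auto

section \<open>Networks given by lists\<close>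

definition lookup_label :: "('v \<times> nat) list \<Rightarrow> 'v \<Rightarrow> nat" where
  "lookup_label lab v = (case map_of lab v of Some l \<Rightarrow> l | None \<Rightarrow> 0)"

definition list_hcount :: "'v list \<Rightarrow> 'v list \<Rightarrow> nat" where
  "list_hcount hs p = length (filter (\<lambda>x. x \<in> set hs) p)"

definition list_net :: "'v list \<Rightarrow> ('v \<times> 'v) list \<Rightarrow> 'v list \<Rightarrow> ('v \<times> nat) list \<Rightarrow> 'v net" where
  "list_net ns es hs lab = \<lparr>nodes = set ns, arcs = set es, hyb = set hs, lbl = lookup_label lab\<rparr>"

definition increasing_arcs :: "'v :: linorder list \<Rightarrow> ('v \<times> 'v) list \<Rightarrow> bool" where
  "increasing_arcs ns es \<longleftrightarrow> (\<forall>(a, b) \<in> set es. a < b \<and> a \<in> set ns \<and> b \<in> set ns)"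

definition sinks :: "'v list \<Rightarrow> ('v \<times> 'v) list \<Rightarrow> 'v list" where
  "sinks ns es = filter (\<lambda>v. succs es v = []) ns"

definition paths_from :: "'v list \<Rightarrow> ('v \<times> 'v) list \<Rightarrow> 'v \<Rightarrow> 'v list list" where
  "paths_from ns es u = (if u \<in> set ns then walks es (length ns) u else [])"

definition leaf_hcount_pairs :: "'v list \<Rightarrow> 'v list \<Rightarrow> 'v list list \<Rightarrow> ('v \<times> nat) list" where
  "leaf_hcount_pairs hs ls ps =
     map (\<lambda>p. (last p, list_hcount hs p)) (filter (\<lambda>p. last p \<in> set ls) ps)"

definition dominators :: "'v list \<Rightarrow> 'v list list \<Rightarrow> 'v \<Rightarrow> 'v list" where
  "dominators ns rps s = foldr (\<lambda>p. filter (\<lambda>x. x \<in> set p)) (filter (\<lambda>p. last p = s) rps) ns"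

definition leaf_info ::
    "'v list \<Rightarrow> ('v \<times> 'v) list \<Rightarrow> ('v \<times> nat) list \<Rightarrow> 'v \<Rightarrow> ('v \<times> nat \<times> 'v list) list" where
  "leaf_info ns es lab r =
    map (\<lambda>s. (s, lookup_label lab s, dominators ns (paths_from ns es r) s)) (sinks ns es)"

definition leaf_rows ::
    "('v \<times> nat \<times> 'v list) list \<Rightarrow> 'v \<Rightarrow> ('v \<times> nat) list \<Rightarrow> (nat \<times> bool \<times> nat list) list" where
  "leaf_rows info v hks =
    map (\<lambda>(s, l, ds). (l, v \<in> set ds, map snd (filter (\<lambda>q. fst q = s) hks))) info"

definition theta_of_rows ::
    "(nat \<times> bool \<times> nat list) list \<Rightarrow> (nat \<times> nat) list \<times> (nat \<times> nat) list \<times> nat list" where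
  "theta_of_rows rows =
    (map (\<lambda>(l, d, ks). (l, Max (set ks))) (filter (\<lambda>(l, d, ks). d) rows),
     map (\<lambda>(l, d, ks). (l, Max (set ks))) (filter (\<lambda>(l, d, ks). \<not> d \<and> ks \<noteq> []) rows),
     map fst (filter (\<lambda>(l, d, ks). ks \<noteq> []) rows))"

text \<open>\<open>theta_arc_list\<close> takes \<open>leaf_info\<close> as an argument rather than computing it, so that symbolic
  evaluation of \<open>map (theta_arc_list ns es hs info) (map snd es)\<close> computes it only once.\<close>

definition theta_arc_list :: "'v list \<Rightarrow> ('v \<times> 'v) list \<Rightarrow> 'v list \<Rightarrow> ('v \<times> nat \<times> 'v list) list \<Rightarrow> 'v
     \<Rightarrow> (nat \<times> nat) list \<times> (nat \<times> nat) list \<times> nat list" where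
  "theta_arc_list ns es hs info v =
     theta_of_rows (leaf_rows info v (leaf_hcount_pairs hs (map fst info) (paths_from ns es v)))"

lemma list_net_simps [simp]:
  "nodes (list_net ns es hs lab) = set ns"
  "arcs (list_net ns es hs lab) = set es"
  "hyb (list_net ns es hs lab) = set hs"
  "lbl (list_net ns es hs lab) = lookup_label lab"
  by (simp_all add: list_net_def)

lemma hcount_list_net: "hcount (list_net ns es hs lab) = list_hcount hs"
  by (simp add: hcount_def list_hcount_def fun_eq_iff)

context
  fixes ns :: "'v :: linorder list" and es
  assumes increasing: "increasing_arcs ns es"
begin

private lemma arcs_subset: "set es \<subseteq> set ns \<times> set ns"
  using increasing by (auto simp: increasing_arcs_def)

text \<open>Along increasing arcs every path is strictly sorted, hence has at most \<open>length ns\<close> nodes,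
  so the bounded enumeration \<open>walks\<close> finds all of them.\<close>

lemma is_path_list_net:
  "is_path (list_net ns es hs lab) u v p \<longleftrightarrow> p \<in> set (paths_from ns es u) \<and> last p = v"
proof
  assume "is_path (list_net ns es hs lab) u v p"
  then have p: "p \<noteq> []" "hd p = u" "last p = v" "set p \<subseteq> set ns"
    and succ: "successively (\<lambda>x y. (x, y) \<in> set es) p"
    by (auto simp: is_path_iff_successively)
  have "successively (<) p"
    using succ by (rule successively_mono) (use increasing in \<open>auto simp: increasing_arcs_def\<close>)
  then have "distinct p"
    by (simp add: successively_conv_sorted_wrt strict_sorted_iff)
  then have "length p \<le> length ns"
    using p(4) by (metis card_length card_mono distinct_card finite_set order_trans)
  moreover have "u \<in> set ns"
    using p by (auto dest: hd_in_set)
  ultimately show "p \<in> set (paths_from ns es u) \<and> last p = v"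
    using p succ by (simp add: paths_from_def set_walks)
next
  assume "p \<in> set (paths_from ns es u) \<and> last p = v"
  then have "u \<in> set ns" "p \<noteq> []" "hd p = u" "last p = v"
    and succ: "successively (\<lambda>x y. (x, y) \<in> set es) p"
    by (auto simp: paths_from_def set_walks split: if_splits)
  moreover have "set p \<subseteq> set ns"
    using successively_set_subset[OF succ arcs_subset] \<open>u \<in> set ns\<close> \<open>hd p = u\<close> by simp
  ultimately show "is_path (list_net ns es hs lab) u v p"
    using succ by (simp add: is_path_iff_successively)
qed

lemma last_in_nodes_if_paths_from: "p \<in> set (paths_from ns es u) \<Longrightarrow> last p \<in> set ns"
  using is_path_list_net[of _ "[]" u "last p" p] by (auto simp: is_path_def)

lemma outdeg_list_net: "outdeg (list_net ns es hs lab) v = card (set (succs es v))"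
proof -
  have "{w \<in> set ns. (v, w) \<in> set es} = set (succs es v)"
    using arcs_subset by (auto simp: set_succs)
  then show ?thesis by (simp add: outdeg_def)
qed

lemma indeg_list_net: "indeg (list_net ns es hs lab) v = card (set (preds es v))"
proof -
  have "{u \<in> set ns. (u, v) \<in> set es} = set (preds es v)"
    using arcs_subset by (auto simp: set_preds)
  then show ?thesis by (simp add: indeg_def)
qed

lemma leaves_list_net: "leaves (list_net ns es hs lab) = set (sinks ns es)"
  by (auto simp: leaves_def sinks_def outdeg_list_net)

lemma root_list_net:
  assumes "filter (\<lambda>v. preds es v = []) ns = [r]"
  shows "rooted (list_net ns es hs lab)" and "root (list_net ns es hs lab) = r"
proof -
  have "v \<in> set ns \<and> indeg (list_net ns es hs lab) v = 0 \<longleftrightarrow> v \<in> set [r]" for v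
    unfolding assms[symmetric] by (simp add: indeg_list_net)
  then show "rooted (list_net ns es hs lab)" "root (list_net ns es hs lab) = r"
    unfolding rooted_def root_def by auto
qed

lemma leaf_hcounts_list_net:
  "leaf_hcounts (list_net ns es hs lab) u =
     set (leaf_hcount_pairs hs (sinks ns es) (paths_from ns es u))"
  using last_in_nodes_if_paths_from
  by (auto simp: set_eq_iff mem_leaf_hcounts is_path_list_net hcount_list_net leaves_list_net
      leaf_hcount_pairs_def)

lemma class_I_list_netI:
  assumes "distinct (map (sorted_list_of_set \<circ> set \<circ> leaf_hcount_pairs hs (sinks ns es))
    (map (paths_from ns es) ns))"
  shows "class_I (list_net ns es hs lab)"
proof -
  have "sorted_list_of_set \<circ> set \<circ> leaf_hcount_pairs hs (sinks ns es) \<circ> paths_from ns es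
      = sorted_list_of_set \<circ> leaf_hcounts (list_net ns es hs lab)"
    by (simp add: fun_eq_iff leaf_hcounts_list_net)
  with assms show ?thesis
    unfolding class_I_iff_inj_on_leaf_hcounts map_map
    by (auto simp: distinct_map intro: inj_on_imageI2)
qed

lemma Aset_list_net:
  assumes "v \<in> set ns"
  shows "Aset (list_net ns es hs lab) v = {s \<in> set (sinks ns es).
     v \<in> set (dominators ns (paths_from ns es (root (list_net ns es hs lab))) s)}"
  using assms
  by (auto simp: Aset_def is_path_list_net leaves_list_net dominators_def set_foldr_filter_Inter)

lemma theta_arc_list_net:
  assumes root: "filter (\<lambda>v. preds es v = []) ns = [r]" and "v \<in> set ns"
  shows "theta_arc (list_net ns es hs lab) S (u, v) =
    (\<lambda>(a, b, c). (set a, set b, S - set c)) (theta_arc_list ns es hs (leaf_info ns es lab r) v)"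
proof -
  let ?N = "list_net ns es hs lab"
  define hks where "hks = leaf_hcount_pairs hs (sinks ns es) (paths_from ns es v)"
  define ks where "ks s = map snd (filter (\<lambda>q. fst q = s) hks)" for s
  define dominated where "dominated s \<longleftrightarrow> v \<in> set (dominators ns (paths_from ns es r) s)" for s
  have rows: "leaf_rows (leaf_info ns es lab r) v hks =
      map (\<lambda>s. (lookup_label lab s, dominated s, ks s)) (sinks ns es)"
    by (simp add: leaf_rows_def leaf_info_def ks_def dominated_def)
  have set_ks: "set (ks s) = {k. (s, k) \<in> leaf_hcounts ?N v}" for s
    by (force simp: ks_def hks_def leaf_hcounts_list_net)
  have A: "Aset ?N v = {s \<in> set (sinks ns es). dominated s}"
    using \<open>v \<in> set ns\<close> by (simp add: Aset_list_net root_list_net(2)[OF root] dominated_def)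
  have "ks s \<noteq> [] \<longleftrightarrow> (\<exists>k. (s, k) \<in> leaf_hcounts ?N v)" for s
    using set_ks[of s] by (metis empty_Collect_eq set_empty)
  moreover have "s \<in> fst ` leaf_hcounts ?N v \<longleftrightarrow> (\<exists>k. (s, k) \<in> leaf_hcounts ?N v)" for s
    by force
  ultimately have C: "Cset ?N v = {s \<in> set (sinks ns es). ks s \<noteq> []}"
    by (auto simp: Cset_eq_fst_leaf_hcounts mem_leaf_hcounts leaves_list_net)
  have B: "Cset ?N v - Aset ?N v = {s \<in> set (sinks ns es). \<not> dominated s \<and> ks s \<noteq> []}"
    by (auto simp: A C)
  have "hweight ?N v s = Max (set (ks s))" if "s \<in> set (sinks ns es)" for s
    using that by (simp add: hweight_eq_Max_leaf_hcounts leaves_list_net set_ks image_def)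
  then have weights: "(\<lambda>s. (lookup_label lab s, hweight ?N v s)) ` X =
      (\<lambda>s. (lookup_label lab s, Max (set (ks s)))) ` X" if "X \<subseteq> set (sinks ns es)" for X
    using that by (auto intro!: image_cong)
  have info_fst: "map fst (leaf_info ns es lab r) = sinks ns es"
    by (simp add: leaf_info_def comp_def)
  show ?thesis
    unfolding theta_arc_def Let_def theta_arc_list_def theta_of_rows_def Bset_def snd_conv B
      info_fst
    unfolding A C hks_def[symmetric] rows
    by (simp add: weights filter_map comp_def image_image)
qed

lemma theta_AB_list_net:
  assumes "filter (\<lambda>v. preds es v = []) ns = [r]"
  shows "theta_AB (list_net ns es hs lab) S = (\<lambda>(a, b, c). (set a, set b, S - set c))
    ` set (map (theta_arc_list ns es hs (leaf_info ns es lab r)) (map snd es))"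
proof -
  have "theta_arc (list_net ns es hs lab) S e = (\<lambda>(a, b, c). (set a, set b, S - set c))
      (theta_arc_list ns es hs (leaf_info ns es lab r) (snd e))" if "e \<in> set es" for e
    using theta_arc_list_net[OF assms, of "snd e"] that arcs_subset by (cases e) auto
  then show ?thesis
    by (simp add: theta_AB_def image_image cong: image_cong)
qed

lemma model_network_list_netI:
  fixes \<tau> :: "'v \<Rightarrow> nat"
  assumes "distinct ns"
    and root: "filter (\<lambda>v. preds es v = []) ns = [r]"
    and labels: "distinct (map (lookup_label lab) (sinks ns es))
      \<and> set (map (lookup_label lab) (sinks ns es)) = S"
    and root_outdeg: "card (set (succs es r)) = 2"
    and tree_outdeg: "\<forall>v \<in> set ns. v \<notin> set hs \<and> succs es v \<noteq> [] \<longrightarrow> card (set (succs es v)) = 2"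
    and hybrid_degs: "\<forall>v \<in> set hs. card (set (succs es v)) = 1 \<and> card (set (preds es v)) \<in> {1, 2}"
    and indeg_two: "\<forall>v \<in> set ns. card (set (preds es v)) = 2 \<longrightarrow> v \<in> set hs"
    and hybrid_child: "\<forall>(a, b) \<in> set es. a \<in> set hs \<longrightarrow> b \<notin> set hs"
    and "set hs \<subseteq> set ns"
    and time_map: "\<forall>(a, b) \<in> set es. if b \<in> set hs then \<tau> a = \<tau> b else \<tau> a < \<tau> b"
  shows "model_network (list_net ns es hs lab) S"
proof -
  let ?N = "list_net ns es hs lab"
  have "(v, v) \<notin> (arcs ?N)\<^sup>+" for v
    by (rule acyclic_if_increasing) (use increasing in \<open>auto simp: increasing_arcs_def\<close>)
  moreover have "bij_betw (lbl ?N) (leaves ?N) S"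
    using labels \<open>distinct ns\<close> by (simp add: leaves_list_net sinks_def bij_betw_def distinct_map)
  moreover have "strong_time_consistent ?N"
    by (rule strong_time_consistent_if_time_map[where \<tau> = \<tau>]) (use time_map in simp)
  ultimately show ?thesis
    using arcs_subset root_list_net[OF root] root_outdeg tree_outdeg hybrid_degs indeg_two
      hybrid_child \<open>set hs \<subseteq> set ns\<close>
    unfolding model_network_def labeled_dag_def
    by (auto simp: outdeg_list_net indeg_list_net leaves_list_net sinks_def)
qed

end

section \<open>The two networks\<close>

definition N3_arcs :: "(nat \<times> nat) list" where
  "N3_arcs =
     [(1,2), (1,3), (2,4), (4,5), (3,6), (4,7), (6,7), (6,8), (5,9), (8,9), (7,10), (5,11), (10,11),
      (8,12), (10,12), (9,13), (11,14), (12,15), (0,1), (0,16), (16,25), (16,17), (17,26), (17,18),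
      (18,27), (18,19), (19,28), (19,20), (20,29), (20,21), (21,30), (21,22), (22,31), (22,23),
      (23,32), (23,24), (24,33), (24,34)]"

definition N3 :: "nat net" where
  "N3 = list_net [0..<35] N3_arcs [2, 3, 7, 9, 11, 12]
     [(13,1), (14,2), (15,3), (25,4), (26,5), (27,6), (28,7), (29,8), (30,9), (31,10), (32,11),
      (33,12), (34,13)]"

definition N4_arcs :: "(nat \<times> nat) list" where
  "N4_arcs =
     [(1,2), (2,3), (1,4), (3,5), (4,5), (5,6), (3,7), (4,8), (7,9), (8,9), (6,10), (8,10), (6,11),
      (7,11), (9,12), (10,13), (11,14), (0,1), (0,15), (15,24), (15,16), (16,25), (16,17), (17,26),
      (17,18), (18,27), (18,19), (19,28), (19,20), (20,29), (20,21), (21,30), (21,22), (22,31),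
      (22,23), (23,32), (23,33)]"

definition N4 :: "nat net" where
  "N4 = list_net [0..<34] N4_arcs [2, 5, 9, 10, 11]
     [(12,1), (13,2), (14,3), (24,4), (25,5), (26,6), (27,7), (28,8), (29,9), (30,10), (31,11),
      (32,12), (33,13)]"

lemma N3_increasing_arcs: "increasing_arcs [0..<35] N3_arcs"
  by code_simp

lemma N4_increasing_arcs: "increasing_arcs [0..<34] N4_arcs"
  by code_simp

lemma N3_single_source: "filter (\<lambda>v. preds N3_arcs v = []) [0..<35] = [0]"
  by code_simp

lemma N4_single_source: "filter (\<lambda>v. preds N4_arcs v = []) [0..<34] = [0]"
  by code_simp

lemma model_network_N3: "model_network N3 {1..13}"
  unfolding N3_def atLeastAtMost_upt
  by (rule model_network_list_netI[OF N3_increasing_arcs _ N3_single_source,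
      where \<tau> = "(!) [0, 1, 1, 1, 2, 3, 2, 2, 3, 3, 3, 3, 3, 4, 4, 4,
                     1, 2, 3, 4, 5, 6, 7, 8, 9, 2, 3, 4, 5, 6, 7, 8, 9, 10, 10]"])
    code_simp+

lemma model_network_N4: "model_network N4 {1..13}"
  unfolding N4_def atLeastAtMost_upt
  by (rule model_network_list_netI[OF N4_increasing_arcs _ N4_single_source,
      where \<tau> = "(!) [0, 1, 1, 2, 2, 2, 3, 3, 3, 3, 3, 3, 4, 4, 4,
                     1, 2, 3, 4, 5, 6, 7, 8, 9, 2, 3, 4, 5, 6, 7, 8, 9, 10, 10]"])
    code_simp+

lemma class_I_N3: "class_I N3"
  unfolding N3_def by (rule class_I_list_netI[OF N3_increasing_arcs]) code_simp

lemma class_I_N4: "class_I N4"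
  unfolding N4_def by (rule class_I_list_netI[OF N4_increasing_arcs]) code_simp

lemma theta_AB_N3_N4: "theta_AB N3 {1..13} = theta_AB N4 {1..13}"
  unfolding N3_def N4_def theta_AB_list_net[OF N3_increasing_arcs N3_single_source]
    theta_AB_list_net[OF N4_increasing_arcs N4_single_source]
  by (rule arg_cong[where f = "image _"]) code_simp

lemma not_net_iso_N3_N4: "\<not> net_iso N3 N4"
proof
  assume "net_iso N3 N4"
  then have "card (nodes N3) = card (nodes N4)"
    by (rule net_iso_card_nodes)
  then show False
    by (simp add: N3_def N4_def)
qed

theorem mainTheorem2:
  shows "\<exists>(N3 :: nat net) (N4 :: nat net).
     model_network N3 {1..13} \<and> model_network N4 {1..13}
     \<and> class_I N3 \<and> class_I N4
     \<and> \<not> net_iso N3 N4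
     \<and> theta_AB N3 {1..13} = theta_AB N4 {1..13}"
  using model_network_N3 model_network_N4 class_I_N3 class_I_N4 not_net_iso_N3_N4 theta_AB_N3_N4
  by blast

end
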